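(* Let $h=z+\sum_{l\ge1}h_l(x)z^{-l}$ and $k=z^2+\sum_{l\ge1}k_l(x)z^{-l}$ satisfy the Riccati system $$h_x+hk=z^3+h_1h+(h_2+k_1),\qquad k_x+k^2=-h_1k+h\,(2k_1-h_2+z^3)-(h_3-2k_2).$$ Then all coefficients $h_j$ ($j\ge3$) and $k_j$ ($j\ge3$) are uniquely determined as differential polynomials (in $x$) in the four functions $h_1,h_2,k_1,k_2$; in particular $h_3=h_1^2-h_{1x}-k_2$. Conversely, for arbitrary smooth $h_1,h_2,k_1,k_2$ there is a unique such pair $(h,k)$. Hence $\mathcal Q^2_3$ is identified with the space of matrices $$\mathcal U(\lambda)=\begin{pmatrix}0&0&1\\ \lambda+h_2+k_1&h_1&0\\ 2k_2-h_3&\lambda+2k_1-h_2&-h_1\end{pmatrix},\qquad \lambda=z^3,$$ parametrized by $(h_1,h_2,k_1,k_2)$.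
   Context: These are the equations characterizing, in the coordinates $h=H^{(1)}$, $k=H^{(2)}$ on $\mathcal Q_2$ (space variable $x=t_2$), the subspace $\mathcal Q^2_3$ of integral curves of the central-system flow $X_2$ lying in $\mathcal S_3=\{H: X_3(H)=0,\ H^{(3)}=z^3\}$. Here $z$ is a formal variable and identities are identities of formal Laurent series, compared coefficient by coefficient in powers of $z$. *)

theory Defs
  imports "HOL-Analysis.Derivative" "HOL-Library.Function_Algebras"
    "HOL-Computational_Algebra.Formal_Laurent_Series"
begin

text \<open>Formal Laurent series in z with finitely many
  positive and possibly infinitely many negative powers are modelled as 'fls' in the
  variable w = z^{-1}: fls_X is w = z^{-1} and fls_X_inv is z.\<close>

type_synonym fn = "real \<Rightarrow> real"

definition smooth :: "fn \<Rightarrow> bool" where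
  "smooth f \<longleftrightarrow> (\<forall>n x. ((deriv ^^ n) f) differentiable (at x))"

definition zz :: "fn fls" where
  "zz = fls_X_inv"

definition ser :: "nat \<Rightarrow> (nat \<Rightarrow> fn) \<Rightarrow> fn fls" where
  "ser d c = zz ^ d + fps_to_fls (Abs_fps c)"

text \<open>x-derivative of ser d c (the leading z^d has constant coefficient).\<close>
definition Dx :: "(nat \<Rightarrow> fn) \<Rightarrow> fn fls" where
  "Dx c = fps_to_fls (Abs_fps (\<lambda>n. deriv (c n)))"

definition cst :: "fn \<Rightarrow> fn fls" where
  "cst f = fls_const f"

definition riccati :: "(nat \<Rightarrow> fn) \<Rightarrow> (nat \<Rightarrow> fn) \<Rightarrow> bool" where
  "riccati hc kc \<longleftrightarrow>
     (let h = ser 1 hc; k = ser 2 kc in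
        Dx hc + h * k = zz ^ 3 + cst (hc 1) * h + cst (hc 2 + kc 1)
      \<and> Dx kc + k * k = - (cst (hc 1) * k) + h * (cst (2 * kc 1 - hc 2) + zz ^ 3)
                         - cst (hc 3 - 2 * kc 2))"

definition Q23 :: "(nat \<Rightarrow> fn) \<Rightarrow> (nat \<Rightarrow> fn) \<Rightarrow> bool" where
  "Q23 hc kc \<longleftrightarrow> hc 0 = 0 \<and> kc 0 = 0 \<and> (\<forall>n. smooth (hc n) \<and> smooth (kc n))
                   \<and> riccati hc kc"

datatype var = H1 | H2 | K1 | K2

datatype dpoly = DConst real | DVar var nat | DAdd dpoly dpoly | DMul dpoly dpoly

fun deval :: "dpoly \<Rightarrow> (var \<Rightarrow> fn) \<Rightarrow> fn" where
  "deval (DConst c) u = (\<lambda>x. c)"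
| "deval (DVar v n) u = (deriv ^^ n) (u v)"
| "deval (DAdd p q) u = deval p u + deval q u"
| "deval (DMul p q) u = deval p u * deval q u"

definition params :: "(nat \<Rightarrow> fn) \<Rightarrow> (nat \<Rightarrow> fn) \<Rightarrow> var \<Rightarrow> fn" where
  "params hc kc v = (case v of H1 \<Rightarrow> hc 1 | H2 \<Rightarrow> hc 2 | K1 \<Rightarrow> kc 1 | K2 \<Rightarrow> kc 2)"

end

theory Submission
  imports Defs
begin

(* Comparing coefficients of z^{-m}, m \<ge> 1, turns the Riccati system into a triangular
   recursion: the first equation at order m determines h_{m+2}, and the second one, once
   h_{m+3} is eliminated by means of the first equation at order m+1, determines 3 k_{m+2}.
   Both right-hand sides involve only lower coefficients, their x-derivatives and
   h_1, h_2, k_1, k_2.  Hence the recursion started from arbitrary smooth h_1, h_2, k_1, k_2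
   is the unique solution, and by induction each coefficient is a differential polynomial
   in h_1, h_2, k_1, k_2, uniformly in these data. *)

unbundle fps_syntax

definition cauchy_coeff :: "(nat \<Rightarrow> fn) \<Rightarrow> (nat \<Rightarrow> fn) \<Rightarrow> nat \<Rightarrow> fn" where
  "cauchy_coeff h k n = (\<Sum>i=0..n. h i * k (n - i))"

(* The coefficients of z^{-m}, m \<ge> 1, of the two Riccati equations; all other coefficients
   agree identically once h_0 = k_0 = 0. *)
definition h_coeff_eq :: "(nat \<Rightarrow> fn) \<Rightarrow> (nat \<Rightarrow> fn) \<Rightarrow> nat \<Rightarrow> bool" where
  "h_coeff_eq h k m \<longleftrightarrow> deriv (h m) + k (m+1) + h (m+2) + cauchy_coeff h k m = h 1 * h m"

definition k_coeff_eq :: "(nat \<Rightarrow> fn) \<Rightarrow> (nat \<Rightarrow> fn) \<Rightarrow> nat \<Rightarrow> bool" where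
  "k_coeff_eq h k m \<longleftrightarrow> deriv (k m) + 2 * k (m+2) + cauchy_coeff k k m
     = - (h 1 * k m) + (2 * k 1 - h 2) * h m + h (m+3)"

lemma deriv_zero [simp]: "deriv (0::fn) = 0"
  by (simp add: zero_fun_def)

lemma riccati_h_coeff:
  assumes "hc 0 = 0" and "kc 0 = 0"
  shows "(Dx hc + ser 1 hc * ser 2 kc) $$ n
           = (zz ^ 3 + cst (hc 1) * ser 1 hc + cst (hc 2 + kc 1)) $$ n
         \<longleftrightarrow> (n \<ge> 1 \<longrightarrow> h_coeff_eq hc kc (nat n))"
proof (cases "n \<ge> 1")
  case True
  then obtain m where n: "n = int m" and "m \<ge> 1"
    by (intro that[of "nat n"]) auto
  then show ?thesis
    unfolding n ser_def zz_def Dx_def cst_def h_coeff_eq_def cauchy_coeff_def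
    by (simp add: ring_distribs fls_X_inv_power_times_conv_shift fls_X_inv_times_conv_shift
        fps_mult_nth nat_add_distrib add_ac flip: fls_times_fps_to_fls)
next
  case False
  then have "n < -3 \<or> n = -3 \<or> n = -2 \<or> n = -1 \<or> n = 0" by linarith
  with False show ?thesis
    unfolding ser_def zz_def Dx_def cst_def
    by (auto simp: assms ring_distribs fls_X_inv_power_times_conv_shift
        fls_X_inv_times_conv_shift fps_mult_nth simp flip: fls_times_fps_to_fls)
qed

lemma riccati_k_coeff:
  assumes "hc 0 = 0" and "kc 0 = 0"
  shows "(Dx kc + ser 2 kc * ser 2 kc) $$ n
           = (- (cst (hc 1) * ser 2 kc) + ser 1 hc * (cst (2 * kc 1 - hc 2) + zz ^ 3)
               - cst (hc 3 - 2 * kc 2)) $$ n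
         \<longleftrightarrow> (n \<ge> 1 \<longrightarrow> k_coeff_eq hc kc (nat n))"
proof (cases "n \<ge> 1")
  case True
  then obtain m where n: "n = int m" and "m \<ge> 1"
    by (intro that[of "nat n"]) auto
  then show ?thesis
    unfolding n ser_def zz_def Dx_def cst_def k_coeff_eq_def cauchy_coeff_def
    by (simp add: ring_distribs fls_X_inv_power_times_conv_shift fls_X_inv_times_conv_shift
        fps_mult_nth nat_add_distrib algebra_simps flip: fls_times_fps_to_fls)
next
  case False
  then have "n < -4 \<or> n = -4 \<or> n = -3 \<or> n = -2 \<or> n = -1 \<or> n = 0" by linarith
  with False show ?thesis
    unfolding ser_def zz_def Dx_def cst_def
    by (auto simp: assms ring_distribs fls_X_inv_power_times_conv_shift
        fls_X_inv_times_conv_shift fps_mult_nth simp flip: fls_times_fps_to_fls)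
qed

lemma riccati_iff_coeff_eqs:
  assumes "hc 0 = 0" and "kc 0 = 0"
  shows "riccati hc kc \<longleftrightarrow> (\<forall>m\<ge>1. h_coeff_eq hc kc m \<and> k_coeff_eq hc kc m)"
proof -
  have "riccati hc kc \<longleftrightarrow>
      (\<forall>n::int. n \<ge> 1 \<longrightarrow> h_coeff_eq hc kc (nat n) \<and> k_coeff_eq hc kc (nat n))"
    unfolding riccati_def Let_def fls_eq_iff
      riccati_h_coeff[of hc kc, OF assms] riccati_k_coeff[of hc kc, OF assms]
    by blast
  also have "\<dots> \<longleftrightarrow> (\<forall>m\<ge>1. h_coeff_eq hc kc m \<and> k_coeff_eq hc kc m)"
    by (metis nat_int nat_mono nat_one_as_int of_nat_1 of_nat_le_iff)
  finally show ?thesis .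
qed

definition h_step :: "(nat \<Rightarrow> fn) \<Rightarrow> (nat \<Rightarrow> fn) \<Rightarrow> nat \<Rightarrow> fn" where
  "h_step h k m = h 1 * h (m-2) - deriv (h (m-2)) - k (m-1) - cauchy_coeff h k (m-2)"

definition k_step :: "(nat \<Rightarrow> fn) \<Rightarrow> (nat \<Rightarrow> fn) \<Rightarrow> nat \<Rightarrow> fn" where
  "k_step h k m = (\<lambda>_. 1/3) *
     (h 1 * h (m-1) - deriv (h (m-1)) - cauchy_coeff h k (m-1)
      - deriv (k (m-2)) - cauchy_coeff k k (m-2) - h 1 * k (m-2) + (2 * k 1 - h 2) * h (m-2))"

lemma h_coeff_eq_iff: "h_coeff_eq h k m \<longleftrightarrow> h (m+2) = h_step h k (m+2)"
  unfolding h_coeff_eq_def h_step_def by (auto simp: algebra_simps)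

lemma k_coeff_eq_iff:
  assumes "h_coeff_eq h k (m+1)"
  shows "k_coeff_eq h k m \<longleftrightarrow> k (m+2) = k_step h k (m+2)"
proof -
  have h3: "h (m+3) = h 1 * h (m+1) - deriv (h (m+1)) - cauchy_coeff h k (m+1) - k (m+2)"
    using assms unfolding h_coeff_eq_def by (simp add: algebra_simps numeral_3_eq_3)
  show ?thesis
    unfolding k_coeff_eq_def h3 k_step_def fun_eq_iff
    by (intro iff_allI) (simp add: field_simps, linarith)
qed

lemma coeff_eqs_iff_recursion:
  "(\<forall>m\<ge>1. h_coeff_eq h k m \<and> k_coeff_eq h k m)
   \<longleftrightarrow> (\<forall>m\<ge>3. h m = h_step h k m \<and> k m = k_step h k m)"
proof
  assume eqs: "\<forall>m\<ge>1. h_coeff_eq h k m \<and> k_coeff_eq h k m"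
  show "\<forall>m\<ge>3. h m = h_step h k m \<and> k m = k_step h k m"
  proof (intro allI impI)
    fix m :: nat
    assume "m \<ge> 3"
    then obtain n where m: "m = n + 2" and "n \<ge> 1"
      by (intro that[of "m - 2"]) auto
    moreover have "h_coeff_eq h k n" "k_coeff_eq h k n" "h_coeff_eq h k (n+1)"
      using eqs \<open>n \<ge> 1\<close> by simp_all
    ultimately show "h m = h_step h k m \<and> k m = k_step h k m"
      using h_coeff_eq_iff k_coeff_eq_iff by simp
  qed
next
  assume rec: "\<forall>m\<ge>3. h m = h_step h k m \<and> k m = k_step h k m"
  show "\<forall>m\<ge>1. h_coeff_eq h k m \<and> k_coeff_eq h k m"
  proof (intro allI impI)
    fix m :: nat
    assume "m \<ge> 1"
    then have "h_coeff_eq h k m" and next_h: "h_coeff_eq h k (m+1)"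
      using rec h_coeff_eq_iff[of h k m] h_coeff_eq_iff[of h k "m+1"] by simp_all
    moreover have "k_coeff_eq h k m"
      using rec \<open>m \<ge> 1\<close> k_coeff_eq_iff[OF next_h] by simp
    ultimately show "h_coeff_eq h k m \<and> k_coeff_eq h k m" by simp
  qed
qed

lemma Q23_iff_recursion:
  "Q23 hc kc \<longleftrightarrow> hc 0 = 0 \<and> kc 0 = 0 \<and> (\<forall>n. smooth (hc n) \<and> smooth (kc n))
     \<and> (\<forall>m\<ge>3. hc m = h_step hc kc m \<and> kc m = k_step hc kc m)"
  unfolding Q23_def using riccati_iff_coeff_eqs coeff_eqs_iff_recursion by blast

lemma cauchy_coeff_cong:
  assumes "\<And>i. i \<le> n \<Longrightarrow> h i = h' i" and "\<And>i. i \<le> n \<Longrightarrow> k i = k' i"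
  shows "cauchy_coeff h k n = cauchy_coeff h' k' n"
  unfolding cauchy_coeff_def using assms by (intro sum.cong) auto

lemma h_step_cong:
  assumes "\<And>i. i < m \<Longrightarrow> h i = h' i" and "\<And>i. i < m \<Longrightarrow> k i = k' i" and "m \<ge> 3"
  shows "h_step h k m = h_step h' k' m"
proof -
  have "cauchy_coeff h k (m-2) = cauchy_coeff h' k' (m-2)"
    using assms by (intro cauchy_coeff_cong) auto
  with assms show ?thesis unfolding h_step_def by simp
qed

lemma k_step_cong:
  assumes "\<And>i. i < m \<Longrightarrow> h i = h' i" and "\<And>i. i < m \<Longrightarrow> k i = k' i" and "m \<ge> 3"
  shows "k_step h k m = k_step h' k' m"
proof -
  have "cauchy_coeff h k (m-1) = cauchy_coeff h' k' (m-1)"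
    and "cauchy_coeff k k (m-2) = cauchy_coeff k' k' (m-2)"
    using assms by (intro cauchy_coeff_cong; auto)+
  with assms show ?thesis unfolding k_step_def by simp
qed

definition smooth_params :: "(var \<Rightarrow> fn) \<Rightarrow> bool" where
  "smooth_params u \<longleftrightarrow> (\<forall>v. smooth (u v))"

fun dpoly_deriv :: "dpoly \<Rightarrow> dpoly" where
  "dpoly_deriv (DConst c) = DConst 0"
| "dpoly_deriv (DVar v n) = DVar v (Suc n)"
| "dpoly_deriv (DAdd p q) = DAdd (dpoly_deriv p) (dpoly_deriv q)"
| "dpoly_deriv (DMul p q) = DAdd (DMul (dpoly_deriv p) q) (DMul p (dpoly_deriv q))"

lemma deval_differentiable:
  assumes "smooth_params u"
  shows "deval p u differentiable (at x)"
  using assms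
  by (induction p)
     (auto simp: smooth_params_def smooth_def plus_fun_def times_fun_def
           intro!: differentiable_add differentiable_mult)

lemma deval_has_deriv:
  assumes "smooth_params u"
  shows "(deval p u has_real_derivative deriv (deval p u) x) (at x)"
  using deval_differentiable[OF assms] DERIV_deriv_iff_real_differentiable by blast

lemma deriv_deval:
  assumes "smooth_params u"
  shows "deriv (deval p u) = deval (dpoly_deriv p) u"
proof (induction p)
  case (DAdd p q)
  have "(deval (DAdd p q) u has_real_derivative deval (dpoly_deriv (DAdd p q)) u x) (at x)" for x
    using DERIV_add[OF deval_has_deriv[OF assms, of p] deval_has_deriv[OF assms, of q]] DAdd
    by (simp add: plus_fun_def)
  then show ?case by (blast intro: ext DERIV_imp_deriv)
next
  case (DMul p q)
  have "(deval (DMul p q) u has_real_derivative deval (dpoly_deriv (DMul p q)) u x) (at x)" for x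
    using DERIV_mult[OF deval_has_deriv[OF assms, of p] deval_has_deriv[OF assms, of q]] DMul
    by (simp add: plus_fun_def times_fun_def mult.commute)
  then show ?case by (blast intro: ext DERIV_imp_deriv)
qed simp_all

lemma smooth_deval:
  assumes "smooth_params u"
  shows "smooth (deval p u)"
proof -
  have "(deriv ^^ n) (deval p u) = deval ((dpoly_deriv ^^ n) p) u" for n
    by (induction n) (simp_all add: deriv_deval[OF assms])
  then show ?thesis
    unfolding smooth_def using deval_differentiable[OF assms] by simp
qed

definition differential_polynomial :: "((var \<Rightarrow> fn) \<Rightarrow> fn) \<Rightarrow> bool" where
  "differential_polynomial F \<longleftrightarrow> (\<exists>p. \<forall>u. smooth_params u \<longrightarrow> F u = deval p u)"

lemma differential_polynomial_const: "differential_polynomial (\<lambda>u. (\<lambda>_. c))"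
  unfolding differential_polynomial_def by (rule exI[of _ "DConst c"]) simp

lemma differential_polynomial_param: "differential_polynomial (\<lambda>u. u v)"
  unfolding differential_polynomial_def by (metis deval.simps(2) funpow_0)

lemma differential_polynomial_add:
  assumes "differential_polynomial F" and "differential_polynomial G"
  shows "differential_polynomial (\<lambda>u. F u + G u)"
  using assms unfolding differential_polynomial_def by (metis deval.simps(3))

lemma differential_polynomial_mult:
  assumes "differential_polynomial F" and "differential_polynomial G"
  shows "differential_polynomial (\<lambda>u. F u * G u)"
  using assms unfolding differential_polynomial_def by (metis deval.simps(4))

lemma differential_polynomial_uminus:
  assumes "differential_polynomial F"
  shows "differential_polynomial (\<lambda>u. - F u)"
proof -
  have "differential_polynomial (\<lambda>u. (\<lambda>_. -1) * F u)"
    by (intro differential_polynomial_mult differential_polynomial_const assms)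
  moreover have "(\<lambda>u. (\<lambda>_. -1) * F u) = (\<lambda>u. - F u)"
    by (simp add: fun_eq_iff)
  ultimately show ?thesis by simp
qed

lemma differential_polynomial_diff:
  assumes "differential_polynomial F" and "differential_polynomial G"
  shows "differential_polynomial (\<lambda>u. F u - G u)"
  using differential_polynomial_add[OF assms(1) differential_polynomial_uminus[OF assms(2)]]
  by simp

lemma differential_polynomial_deriv:
  assumes "differential_polynomial F"
  shows "differential_polynomial (\<lambda>u. deriv (F u))"
  using assms deriv_deval unfolding differential_polynomial_def by metis

lemma differential_polynomial_sum:
  assumes "\<And>i. i \<in> A \<Longrightarrow> differential_polynomial (F i)"
  shows "differential_polynomial (\<lambda>u. \<Sum>i\<in>A. F i u)"
  using assms
proof (induction A rule: infinite_finite_induct)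
  case (insert i A)
  then have "differential_polynomial (\<lambda>u. F i u + (\<Sum>i\<in>A. F i u))"
    by (intro differential_polynomial_add) auto
  with insert.hyps show ?case by (simp del: plus_fun_apply)
qed (use differential_polynomial_const[of 0] in \<open>simp_all add: zero_fun_def\<close>)

lemmas differential_polynomial_intros =
  differential_polynomial_const differential_polynomial_param differential_polynomial_add
  differential_polynomial_mult differential_polynomial_diff differential_polynomial_deriv
  differential_polynomial_sum

lemma differential_polynomial_h_step:
  assumes "\<And>i. i < m \<Longrightarrow> differential_polynomial (\<lambda>u. h u i)"
    and "\<And>i. i < m \<Longrightarrow> differential_polynomial (\<lambda>u. k u i)" and "m \<ge> 3"
  shows "differential_polynomial (\<lambda>u. h_step (h u) (k u) m)"
  unfolding h_step_def cauchy_coeff_def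
  using assms by (intro differential_polynomial_intros) auto

lemma differential_polynomial_k_step:
  assumes "\<And>i. i < m \<Longrightarrow> differential_polynomial (\<lambda>u. h u i)"
    and "\<And>i. i < m \<Longrightarrow> differential_polynomial (\<lambda>u. k u i)" and "m \<ge> 3"
  shows "differential_polynomial (\<lambda>u. k_step (h u) (k u) m)"
  unfolding k_step_def cauchy_coeff_def numeral_fun
  using assms by (intro differential_polynomial_intros) auto

definition riccati_step :: "(var \<Rightarrow> fn) \<Rightarrow> (nat \<Rightarrow> fn \<times> fn) \<Rightarrow> nat \<Rightarrow> fn \<times> fn" where
  "riccati_step u c m =
     (if m = 0 then (0, 0)
      else if m = 1 then (u H1, u K1)
      else if m = 2 then (u H2, u K2)
      else (h_step (fst \<circ> c) (snd \<circ> c) m, k_step (fst \<circ> c) (snd \<circ> c) m))"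

(* The truncation to i < m only exposes the well-founded recursion; see riccati_coeffs_unfold. *)
function riccati_coeffs :: "(var \<Rightarrow> fn) \<Rightarrow> nat \<Rightarrow> fn \<times> fn" where
  "riccati_coeffs u m = riccati_step u (\<lambda>i. if i < m then riccati_coeffs u i else (0, 0)) m"
  by auto
termination by (relation "measure snd") auto

declare riccati_coeffs.simps [simp del]

lemma riccati_step_cong:
  assumes "\<And>i. i < m \<Longrightarrow> c i = c' i"
  shows "riccati_step u c m = riccati_step u c' m"
  using h_step_cong[of m "fst \<circ> c" "fst \<circ> c'" "snd \<circ> c" "snd \<circ> c'"]
    k_step_cong[of m "fst \<circ> c" "fst \<circ> c'" "snd \<circ> c" "snd \<circ> c'"] assms
  unfolding riccati_step_def by simp

lemma riccati_coeffs_unfold: "riccati_coeffs u m = riccati_step u (riccati_coeffs u) m"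
  by (subst riccati_coeffs.simps) (rule riccati_step_cong, simp)

lemma riccati_coeffs_initial [simp]:
  "riccati_coeffs u 0 = (0, 0)" "riccati_coeffs u (Suc 0) = (u H1, u K1)"
  "riccati_coeffs u 2 = (u H2, u K2)"
  by (simp_all add: riccati_coeffs_unfold[of u] riccati_step_def)

lemma riccati_coeffs_rec:
  "m \<ge> 3 \<Longrightarrow> riccati_coeffs u m
     = (h_step (fst \<circ> riccati_coeffs u) (snd \<circ> riccati_coeffs u) m,
        k_step (fst \<circ> riccati_coeffs u) (snd \<circ> riccati_coeffs u) m)"
  by (simp add: riccati_coeffs_unfold[of u m] riccati_step_def)

lemma params_eq_iff:
  "params hc kc = u \<longleftrightarrow> hc 1 = u H1 \<and> hc 2 = u H2 \<and> kc 1 = u K1 \<and> kc 2 = u K2"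
  unfolding params_def fun_eq_iff by (auto split: var.split)

lemma Q23_smooth_params: "Q23 hc kc \<Longrightarrow> smooth_params (params hc kc)"
  unfolding Q23_def smooth_params_def params_def by (auto split: var.split)

lemma Q23_riccati_coeffs:
  assumes "Q23 hc kc"
  shows "riccati_coeffs (params hc kc) m = (hc m, kc m)"
proof (induction m rule: less_induct)
  case (less m)
  have "riccati_coeffs (params hc kc) m = riccati_step (params hc kc) (\<lambda>i. (hc i, kc i)) m"
    unfolding riccati_coeffs_unfold[of _ m] using less.IH by (rule riccati_step_cong)
  also have "\<dots> = (hc m, kc m)"
    using assms unfolding Q23_iff_recursion riccati_step_def params_def comp_def by auto
  finally show ?case .
qed

lemma differential_polynomial_riccati_coeffs:
  "differential_polynomial (\<lambda>u. fst (riccati_coeffs u m))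
   \<and> differential_polynomial (\<lambda>u. snd (riccati_coeffs u m))"
proof (induction m rule: less_induct)
  case (less m)
  consider "m = 0" | "m = 1" | "m = 2" | "m \<ge> 3" by linarith
  then show ?case
  proof cases
    case 4
    with less.IH
    have "differential_polynomial
            (\<lambda>u. h_step (fst \<circ> riccati_coeffs u) (snd \<circ> riccati_coeffs u) m)"
      and "differential_polynomial
            (\<lambda>u. k_step (fst \<circ> riccati_coeffs u) (snd \<circ> riccati_coeffs u) m)"
      by (intro differential_polynomial_h_step differential_polynomial_k_step; simp)+
    with 4 show ?thesis by (simp add: riccati_coeffs_rec)
  qed (simp_all add: differential_polynomial_param differential_polynomial_const[of 0])
qed

lemma riccati_coeffs_deval:
  obtains P Q
  where "\<And>m u. smooth_params u \<Longrightarrow> riccati_coeffs u m = (deval (P m) u, deval (Q m) u)"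
proof -
  have "\<forall>m. \<exists>p. \<forall>u. smooth_params u \<longrightarrow> fst (riccati_coeffs u m) = deval p u"
    and "\<forall>m. \<exists>q. \<forall>u. smooth_params u \<longrightarrow> snd (riccati_coeffs u m) = deval q u"
    using differential_polynomial_riccati_coeffs unfolding differential_polynomial_def by blast+
  then obtain P Q
    where "\<forall>m u. smooth_params u \<longrightarrow> fst (riccati_coeffs u m) = deval (P m) u"
      and "\<forall>m u. smooth_params u \<longrightarrow> snd (riccati_coeffs u m) = deval (Q m) u"
    by metis
  then show ?thesis by (intro that) (simp add: prod_eq_iff)
qed

lemma Q23_riccati_coeffs_solution:
  assumes "smooth_params u"
  shows "Q23 (fst \<circ> riccati_coeffs u) (snd \<circ> riccati_coeffs u)"
proof -
  obtain P Q where PQ: "\<And>m. riccati_coeffs u m = (deval (P m) u, deval (Q m) u)"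
    using riccati_coeffs_deval assms by metis
  have "\<forall>n. smooth (fst (riccati_coeffs u n)) \<and> smooth (snd (riccati_coeffs u n))"
    unfolding PQ using smooth_deval[OF assms] by simp
  then show ?thesis unfolding Q23_iff_recursion by (simp add: riccati_coeffs_rec)
qed

lemma params_riccati_coeffs: "params (fst \<circ> riccati_coeffs u) (snd \<circ> riccati_coeffs u) = u"
  unfolding params_eq_iff by simp

lemma Q23_ex1_params:
  assumes "smooth_params u"
  shows "\<exists>!p. Q23 (fst p) (snd p) \<and> params (fst p) (snd p) = u"
proof -
  let ?sol = "(fst \<circ> riccati_coeffs u, snd \<circ> riccati_coeffs u)"
  have "Q23 (fst ?sol) (snd ?sol) \<and> params (fst ?sol) (snd ?sol) = u"
    using Q23_riccati_coeffs_solution[OF assms] params_riccati_coeffs by simp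
  moreover have "p = ?sol" if "Q23 (fst p) (snd p) \<and> params (fst p) (snd p) = u" for p
  proof -
    have "riccati_coeffs u m = (fst p m, snd p m)" for m
      using that Q23_riccati_coeffs[of "fst p" "snd p"] by blast
    then show ?thesis by (simp add: prod_eq_iff fun_eq_iff)
  qed
  ultimately show ?thesis by (rule ex1I)
qed

lemma Q23_h3: "Q23 hc kc \<Longrightarrow> hc 3 = hc 1 * hc 1 - deriv (hc 1) - kc 2"
  unfolding Q23_iff_recursion h_step_def cauchy_coeff_def by simp

theorem mainTheorem12:
  shows "(\<exists>P Q :: nat \<Rightarrow> dpoly. \<forall>hc kc. Q23 hc kc \<longrightarrow>
            (\<forall>j\<ge>3. hc j = deval (P j) (params hc kc) \<and> kc j = deval (Q j) (params hc kc)))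
       \<and> (\<forall>hc kc. Q23 hc kc \<longrightarrow> hc 3 = hc 1 * hc 1 - deriv (hc 1) - kc 2)
       \<and> (\<forall>a1 a2 b1 b2. smooth a1 \<and> smooth a2 \<and> smooth b1 \<and> smooth b2 \<longrightarrow>
            (\<exists>!p. Q23 (fst p) (snd p) \<and> fst p 1 = a1 \<and> fst p 2 = a2
                  \<and> snd p 1 = b1 \<and> snd p 2 = b2))"
proof (intro conjI allI impI)
  obtain P Q
    where "\<And>m u. smooth_params u \<Longrightarrow> riccati_coeffs u m = (deval (P m) u, deval (Q m) u)"
    using riccati_coeffs_deval by blast
  then have "\<forall>hc kc. Q23 hc kc \<longrightarrow>
      (\<forall>j\<ge>3. hc j = deval (P j) (params hc kc) \<and> kc j = deval (Q j) (params hc kc))"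
    using Q23_riccati_coeffs Q23_smooth_params by (metis prod.inject)
  then show "\<exists>P Q :: nat \<Rightarrow> dpoly. \<forall>hc kc. Q23 hc kc \<longrightarrow>
      (\<forall>j\<ge>3. hc j = deval (P j) (params hc kc) \<and> kc j = deval (Q j) (params hc kc))"
    by blast
next
  fix hc kc
  assume "Q23 hc kc"
  then show "hc 3 = hc 1 * hc 1 - deriv (hc 1) - kc 2" by (rule Q23_h3)
next
  fix a1 a2 b1 b2
  assume "smooth a1 \<and> smooth a2 \<and> smooth b1 \<and> smooth b2"
  then have "smooth_params (case_var a1 a2 b1 b2)"
    unfolding smooth_params_def by (simp split: var.split)
  from Q23_ex1_params[OF this]
  show "\<exists>!p. Q23 (fst p) (snd p) \<and> fst p 1 = a1 \<and> fst p 2 = a2 \<and> snd p 1 = b1 \<and> snd p 2 = b2"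
    by (simp add: params_eq_iff)
qed

end
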